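(* Let $(X,\mathrm{d})$ be a compact metric space. The metrics $\mathrm{d}_L$ and $\mathrm{d}_W$ define the same topology on the set $\mathrm{Lip}(X,\mathrm{d})$ of bi-Lipschitz homeomorphisms of $X$.
   Context: $\mathrm{d}_{C^0}(f,g)=\max_{x}\mathrm{d}(f(x),g(x))+\max_x\mathrm{d}(f^{-1}(x),g^{-1}(x))$. $\mathrm{d}'_W(f,g)=\sup_{x\ne y}\frac{|\mathrm{d}(f(x),f(y))-\mathrm{d}(g(x),g(y))|}{\mathrm{d}(x,y)}$ and $\mathrm{d}_W(f,g)=\mathrm{d}_{C^0}(f,g)+\mathrm{d}'_W(f,g)+\mathrm{d}'_W(f^{-1},g^{-1})$. $\mathrm{d}'_L(f,g)=\sup_{x\ne y}\left|\log\frac{\mathrm{d}(f(x),f(y))}{\mathrm{d}(g(x),g(y))}\right|$ and $\mathrm{d}_L(f,g)=\mathrm{d}_{C^0}(f,g)+\mathrm{d}'_L(f,g)+\mathrm{d}'_L(f^{-1},g^{-1})$. *)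

theory Defs
  imports "HOL-Analysis.Analysis"
begin

text \<open>The compact metric space X is the (universe of the) type 'a :: metric_space,
  with the standing hypothesis compact UNIV.\<close>

text \<open>Lip(X,d): bi-Lipschitz homeomorphisms of X (bijections such that f and its inverse
  are Lipschitz; these are automatically homeomorphisms).\<close>
definition biLip :: "('a::metric_space \<Rightarrow> 'a) set" where
  "biLip = {f. bij f \<and> (\<exists>C. C-lipschitz_on UNIV f) \<and> (\<exists>C. C-lipschitz_on UNIV (inv f))}"

definition dC0 :: "('a::metric_space \<Rightarrow> 'a) \<Rightarrow> ('a \<Rightarrow> 'a) \<Rightarrow> real" where
  "dC0 f g = (SUP x. dist (f x) (g x)) + (SUP x. dist (inv f x) (inv g x))"

text \<open>Supremum over pairs x \<noteq> y; 0 is adjoined so that the supremum is 0 (rather than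
  unspecified) when X is a single point. All quantities are nonnegative, so this does not
  change the value otherwise.\<close>
definition dW' :: "('a::metric_space \<Rightarrow> 'a) \<Rightarrow> ('a \<Rightarrow> 'a) \<Rightarrow> real" where
  "dW' f g = Sup (insert 0 {\<bar>dist (f x) (f y) - dist (g x) (g y)\<bar> / dist x y | x y. x \<noteq> y})"

definition dW :: "('a::metric_space \<Rightarrow> 'a) \<Rightarrow> ('a \<Rightarrow> 'a) \<Rightarrow> real" where
  "dW f g = dC0 f g + dW' f g + dW' (inv f) (inv g)"

definition dL' :: "('a::metric_space \<Rightarrow> 'a) \<Rightarrow> ('a \<Rightarrow> 'a) \<Rightarrow> real" where
  "dL' f g = Sup (insert 0 {\<bar>ln (dist (f x) (f y) / dist (g x) (g y))\<bar> | x y. x \<noteq> y})"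

definition dL :: "('a::metric_space \<Rightarrow> 'a) \<Rightarrow> ('a \<Rightarrow> 'a) \<Rightarrow> real" where
  "dL f g = dC0 f g + dL' f g + dL' (inv f) (inv g)"

definition metric_open :: "'b set \<Rightarrow> ('b \<Rightarrow> 'b \<Rightarrow> real) \<Rightarrow> 'b set \<Rightarrow> bool" where
  "metric_open M d U \<longleftrightarrow> U \<subseteq> M \<and> (\<forall>x\<in>U. \<exists>e>0. \<forall>y\<in>M. d x y < e \<longrightarrow> y \<in> U)"

end

theory Submission
  imports Defs
begin

(* Every f in Lip(X,d) is K-bi-Lipschitz for some K >= 1, i.e. f and its
   inverse distort distances by at most a factor K. For such f and any bi-Lipschitz g,
   the two "derivative" terms d'_W and d'_L are locally comparable: pointwise, with
   A = d(f x, f y), B = d(g x, g y), D = d(x, y), elementary estimates on ln give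
   |ln(A/B)| <= 2K |A - B|/D  when |A - B|/D <= 1/(2K), and
   |A - B|/D <= 2K |ln(A/B)|  when |ln(A/B)| <= 1/2.
   Passing to suprema (the generic operator pair_sup below) and adding the common
   C^0 part yields d_L(f,g) <= 2K d_W(f,g) for d_W(f,g) small, and vice versa.
   Compactness of X enters only to make the C^0 part a finite nonnegative number.
   Finally, two distances that are locally dominated by each other at every point
   have the same open sets; this is the main theorem. *)

section \<open>Bi-Lipschitz maps with an explicit constant\<close>

definition bilipschitz_with :: "real \<Rightarrow> ('a::metric_space \<Rightarrow> 'a) \<Rightarrow> bool" where
  "bilipschitz_with K f \<longleftrightarrow>
     1 \<le> K \<and> (\<forall>x y. dist (f x) (f y) \<le> K * dist x y \<and> dist x y \<le> K * dist (f x) (f y))"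

lemma bilipschitz_withD:
  assumes "bilipschitz_with K f"
  shows "1 \<le> K" "dist (f x) (f y) \<le> K * dist x y" "dist x y \<le> K * dist (f x) (f y)"
  using assms unfolding bilipschitz_with_def by auto

lemma bilipschitz_with_dist_pos:
  assumes "bilipschitz_with K f" "x \<noteq> y"
  shows "0 < dist (f x) (f y)"
proof -
  have "0 < dist x y" using assms(2) by simp
  also have "\<dots> \<le> K * dist (f x) (f y)" by (rule bilipschitz_withD(3)[OF assms(1)])
  finally show ?thesis using bilipschitz_withD(1)[OF assms(1)] by (simp add: zero_less_mult_iff)
qed

lemma biLip_bilipschitz_with:
  assumes "f \<in> biLip"
  obtains K where "bilipschitz_with K f" "bilipschitz_with K (inv f)"
proof -
  from assms obtain C1 C2 where "bij f" and lip_f: "C1-lipschitz_on UNIV f"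
    and lip_inv: "C2-lipschitz_on UNIV (inv f)" unfolding biLip_def by blast
  define K where "K = max 1 (max C1 C2)"
  have f_le: "dist (f x) (f y) \<le> K * dist x y" for x y
  proof -
    have "dist (f x) (f y) \<le> C1 * dist x y" using lipschitz_onD[OF lip_f] by auto
    also have "\<dots> \<le> K * dist x y" unfolding K_def by (intro mult_right_mono) auto
    finally show ?thesis .
  qed
  have inv_le: "dist (inv f x) (inv f y) \<le> K * dist x y" for x y
  proof -
    have "dist (inv f x) (inv f y) \<le> C2 * dist x y" using lipschitz_onD[OF lip_inv] by auto
    also have "\<dots> \<le> K * dist x y" unfolding K_def by (intro mult_right_mono) auto
    finally show ?thesis .
  qed
  have "dist x y \<le> K * dist (f x) (f y)" for x y
    using inv_le[of "f x" "f y"] \<open>bij f\<close> by (simp add: bij_is_inj)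
  moreover have "dist x y \<le> K * dist (inv f x) (inv f y)" for x y
    using f_le[of "inv f x" "inv f y"] \<open>bij f\<close> by (simp add: bij_is_surj surj_f_inv_f)
  moreover have "1 \<le> K" unfolding K_def by simp
  ultimately show ?thesis
    using that f_le inv_le unfolding bilipschitz_with_def by blast
qed

section \<open>Elementary estimates comparing ratios and differences\<close>

lemma abs_ln_ratio_le:
  fixes A B c :: real
  assumes "0 < A" "0 < B" "A \<le> c * B" "B \<le> c * A"
  shows "\<bar>ln (A / B)\<bar> \<le> ln c"
proof -
  have "0 < c * B" using assms by linarith
  hence "0 < c" using assms(2) by (simp add: zero_less_mult_iff)
  have "ln (A / B) \<le> ln c" using assms \<open>0 < c\<close> by (simp add: pos_divide_le_eq mult.commute)
  moreover have "ln (B / A) \<le> ln c" using assms \<open>0 < c\<close> by (simp add: pos_divide_le_eq mult.commute)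
  moreover have "ln (B / A) = - ln (A / B)" using assms by (simp add: ln_div)
  ultimately show ?thesis by linarith
qed

lemma abs_diff_le_of_abs_ln_ratio_le:
  fixes A B t :: real
  assumes "0 < A" "0 < B" "\<bar>ln (A / B)\<bar> \<le> t" "t \<le> 1 / 2"
  shows "\<bar>A - B\<bar> \<le> 2 * t * A"
proof -
  have ln_BA: "\<bar>ln (B / A)\<bar> \<le> t" using assms by (simp add: ln_div)
  have "exp (- t) \<le> exp (ln (B / A))" "exp (ln (B / A)) \<le> exp t"
    using ln_BA by (simp_all add: abs_le_iff)
  moreover have "exp (ln (B / A)) = B / A" using assms by simp
  moreover have "1 - t \<le> exp (- t)" using exp_ge_add_one_self[of "- t"] by simp
  moreover have "exp t \<le> 1 + 2 * t" using ln_BA assms(4) by (intro real_exp_bound_lemma) auto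
  ultimately have "1 - t \<le> B / A" "B / A \<le> 1 + 2 * t" by linarith+
  hence "A - t * A \<le> B" "B \<le> A + 2 * t * A" using assms(1) by (simp_all add: field_simps)
  moreover have "0 \<le> t" using ln_BA by linarith
  ultimately show ?thesis using assms(1) by (simp add: abs_le_iff)
qed

text \<open>The mean value estimate for ln on [c, \<infinity>): ln has slope at most 1/c there.\<close>
lemma ln_diff_le:
  fixes u v c :: real
  assumes "0 < c" "c \<le> u" "c \<le> v"
  shows "ln u - ln v \<le> \<bar>u - v\<bar> / c"
proof -
  have "ln u - ln v = ln (u / v)" using assms by (simp add: ln_div)
  also have "\<dots> \<le> u / v - 1" using assms by (intro ln_le_minus_one) auto
  also have "\<dots> = (u - v) / v" using assms by (simp add: field_simps)
  also have "\<dots> \<le> \<bar>u - v\<bar> / v" using assms by (simp add: divide_right_mono)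
  also have "\<dots> \<le> \<bar>u - v\<bar> / c" using assms by (simp add: frac_le)
  finally show ?thesis .
qed

lemma abs_ln_ratio_le_of_diff_quotient_le:
  fixes A B D K s :: real
  assumes "0 < D" "1 \<le> K" "D \<le> K * A" "\<bar>A - B\<bar> / D \<le> s" "s \<le> 1 / (2 * K)"
  shows "\<bar>ln (A / B)\<bar> \<le> 2 * K * s"
proof -
  define c where "c = D / (2 * K)"
  have "0 < c" using assms unfolding c_def by simp
  have "\<bar>A - B\<bar> \<le> s * D" using assms(1,4) by (simp add: pos_divide_le_eq)
  also have "\<dots> \<le> c"
    using mult_right_mono[OF assms(5) less_imp_le[OF assms(1)]] unfolding c_def by simp
  finally have diff: "\<bar>A - B\<bar> \<le> c" .
  have "D / K \<le> A" using assms by (simp add: pos_divide_le_eq mult.commute)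
  moreover have "D / K = 2 * c" using assms(2) unfolding c_def by simp
  ultimately have "c \<le> A" "c \<le> B" using diff \<open>0 < c\<close> by linarith+
  hence "\<bar>ln (A / B)\<bar> \<le> \<bar>A - B\<bar> / c"
    using ln_diff_le[OF \<open>0 < c\<close>, of A B] ln_diff_le[OF \<open>0 < c\<close>, of B A] \<open>0 < c\<close>
    by (simp add: ln_div abs_minus_commute abs_le_iff)
  also have "\<dots> = 2 * K * (\<bar>A - B\<bar> / D)" using assms(1,2) unfolding c_def by simp
  also have "\<dots> \<le> 2 * K * s" using assms(2,4) by (intro mult_left_mono) auto
  finally show ?thesis .
qed

section \<open>Suprema over pairs of distinct points\<close>

text \<open>The common shape of d'_W and d'_L: the supremum of a quantity over pairs of
  distinct points, with 0 adjoined.\<close>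
definition pair_sup :: "('a \<Rightarrow> 'a \<Rightarrow> real) \<Rightarrow> real" where
  "pair_sup \<phi> = Sup (insert 0 {\<phi> x y | x y. x \<noteq> y})"

lemma dW'_pair_sup:
  "dW' f g = pair_sup (\<lambda>x y. \<bar>dist (f x) (f y) - dist (g x) (g y)\<bar> / dist x y)"
  by (simp add: dW'_def pair_sup_def)

lemma dL'_pair_sup: "dL' f g = pair_sup (\<lambda>x y. \<bar>ln (dist (f x) (f y) / dist (g x) (g y))\<bar>)"
  by (simp add: dL'_def pair_sup_def)

lemma pair_sup_bdd_above:
  fixes \<phi> :: "'a \<Rightarrow> 'a \<Rightarrow> real"
  assumes "\<And>x y. x \<noteq> y \<Longrightarrow> \<phi> x y \<le> M"
  shows "bdd_above (insert 0 {\<phi> x y | x y. x \<noteq> y})"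
  using assms by (intro bdd_aboveI[where M = "max 0 M"]) (auto intro: max.coboundedI2)

lemma pair_sup_upper:
  assumes "\<And>x y. x \<noteq> y \<Longrightarrow> \<phi> x y \<le> M" "x \<noteq> y"
  shows "\<phi> x y \<le> pair_sup \<phi>"
  unfolding pair_sup_def using assms(2) by (intro cSup_upper pair_sup_bdd_above[OF assms(1)]) auto

lemma pair_sup_nonneg:
  assumes "\<And>x y. x \<noteq> y \<Longrightarrow> \<phi> x y \<le> M"
  shows "0 \<le> pair_sup \<phi>"
  unfolding pair_sup_def by (intro cSup_upper pair_sup_bdd_above[OF assms]) auto

lemma pair_sup_compare:
  assumes bounded: "\<And>x y. x \<noteq> y \<Longrightarrow> \<phi> x y \<le> M" and "0 \<le> c"
    and pointwise: "\<And>x y. x \<noteq> y \<Longrightarrow> \<phi> x y \<le> pair_sup \<phi> \<Longrightarrow> \<psi> x y \<le> c * pair_sup \<phi>"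
  shows "pair_sup \<psi> \<le> c * pair_sup \<phi>"
  unfolding pair_sup_def[of \<psi>]
proof (rule cSup_least)
  fix r assume "r \<in> insert 0 {\<psi> x y | x y. x \<noteq> y}"
  then consider "r = 0" | x y where "x \<noteq> y" "r = \<psi> x y" by blast
  then show "r \<le> c * pair_sup \<phi>"
  proof cases
    case 1
    then show ?thesis using pair_sup_nonneg[of \<phi> M, OF bounded] \<open>0 \<le> c\<close> by simp
  next
    case 2
    then show ?thesis using pointwise pair_sup_upper[of \<phi> M, OF bounded] by simp
  qed
qed simp

section \<open>Comparison of the derivative terms d'_W and d'_L\<close>

lemma diff_quotient_bounded:
  assumes "bilipschitz_with Kf f" "bilipschitz_with Kg g" "x \<noteq> y"
  shows "\<bar>dist (f x) (f y) - dist (g x) (g y)\<bar> / dist x y \<le> Kf + Kg"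
proof -
  have "\<bar>dist (f x) (f y) - dist (g x) (g y)\<bar> \<le> dist (f x) (f y) + dist (g x) (g y)"
    using zero_le_dist[of "f x" "f y"] zero_le_dist[of "g x" "g y"] by linarith
  also have "\<dots> \<le> (Kf + Kg) * dist x y"
    using bilipschitz_withD(2)[OF assms(1)] bilipschitz_withD(2)[OF assms(2)]
    by (simp add: distrib_right add_mono)
  finally show ?thesis using assms(3) by (simp add: pos_divide_le_eq)
qed

lemma log_ratio_bounded:
  assumes "bilipschitz_with Kf f" "bilipschitz_with Kg g" "x \<noteq> y"
  shows "\<bar>ln (dist (f x) (f y) / dist (g x) (g y))\<bar> \<le> ln (Kf * Kg)"
proof (rule abs_ln_ratio_le)
  note f = bilipschitz_withD[OF assms(1)] and g = bilipschitz_withD[OF assms(2)]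
  show "0 < dist (f x) (f y)" "0 < dist (g x) (g y)"
    using assms bilipschitz_with_dist_pos by blast+
  have "dist (f x) (f y) \<le> Kf * dist x y" by (rule f(2))
  also have "\<dots> \<le> Kf * (Kg * dist (g x) (g y))" using f(1) g(3) by simp
  finally show "dist (f x) (f y) \<le> Kf * Kg * dist (g x) (g y)" by (simp add: mult.assoc)
  have "dist (g x) (g y) \<le> Kg * dist x y" by (rule g(2))
  also have "\<dots> \<le> Kg * (Kf * dist (f x) (f y))" using g(1) f(3) by simp
  finally show "dist (g x) (g y) \<le> Kf * Kg * dist (f x) (f y)" by (simp add: mult_ac)
qed

lemma dW'_nonneg: "bilipschitz_with Kf f \<Longrightarrow> bilipschitz_with Kg g \<Longrightarrow> 0 \<le> dW' f g"
  unfolding dW'_pair_sup by (rule pair_sup_nonneg[OF diff_quotient_bounded])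

lemma dL'_nonneg: "bilipschitz_with Kf f \<Longrightarrow> bilipschitz_with Kg g \<Longrightarrow> 0 \<le> dL' f g"
  unfolding dL'_pair_sup by (rule pair_sup_nonneg[OF log_ratio_bounded])

lemma dL'_le_dW':
  assumes f: "bilipschitz_with K f" and g: "bilipschitz_with Kg g" and small: "dW' f g \<le> 1 / (2 * K)"
  shows "dL' f g \<le> 2 * K * dW' f g"
  unfolding dL'_pair_sup dW'_pair_sup
proof (rule pair_sup_compare[OF diff_quotient_bounded[OF f g]])
  show "0 \<le> 2 * K" using bilipschitz_withD(1)[OF f] by simp
next
  fix x y :: 'a assume "x \<noteq> y"
  let ?s = "pair_sup (\<lambda>x y. \<bar>dist (f x) (f y) - dist (g x) (g y)\<bar> / dist x y)"
  assume "\<bar>dist (f x) (f y) - dist (g x) (g y)\<bar> / dist x y \<le> ?s"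
  then show "\<bar>ln (dist (f x) (f y) / dist (g x) (g y))\<bar> \<le> 2 * K * ?s"
    using \<open>x \<noteq> y\<close> small bilipschitz_withD[OF f]
    by (intro abs_ln_ratio_le_of_diff_quotient_le) (auto simp: dW'_pair_sup)
qed

lemma dW'_le_dL':
  assumes f: "bilipschitz_with K f" and g: "bilipschitz_with Kg g" and small: "dL' f g \<le> 1 / 2"
  shows "dW' f g \<le> 2 * K * dL' f g"
  unfolding dL'_pair_sup dW'_pair_sup
proof (rule pair_sup_compare[OF log_ratio_bounded[OF f g]])
  show "0 \<le> 2 * K" using bilipschitz_withD(1)[OF f] by simp
next
  fix x y :: 'a assume "x \<noteq> y"
  let ?t = "pair_sup (\<lambda>x y. \<bar>ln (dist (f x) (f y) / dist (g x) (g y))\<bar>)"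
  define A B D where "A = dist (f x) (f y)" and "B = dist (g x) (g y)" and "D = dist x y"
  assume "\<bar>ln (dist (f x) (f y) / dist (g x) (g y))\<bar> \<le> ?t"
  hence "\<bar>A - B\<bar> \<le> 2 * ?t * A"
    using \<open>x \<noteq> y\<close> small bilipschitz_with_dist_pos[OF f] bilipschitz_with_dist_pos[OF g]
    unfolding A_def B_def by (intro abs_diff_le_of_abs_ln_ratio_le) (auto simp: dL'_pair_sup)
  also have "\<dots> \<le> 2 * ?t * (K * D)"
    using bilipschitz_withD(2)[OF f] dL'_nonneg[OF f g]
    unfolding A_def D_def dL'_pair_sup by (intro mult_left_mono) auto
  finally show "\<bar>A - B\<bar> / D \<le> 2 * K * ?t"
    using \<open>x \<noteq> y\<close> unfolding D_def by (simp add: pos_divide_le_eq mult_ac)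
qed

lemma SUP_dist_nonneg:
  fixes p q :: "'b \<Rightarrow> 'a::metric_space"
  assumes "bounded (UNIV :: 'a set)"
  shows "0 \<le> (SUP x. dist (p x) (q x))"
proof -
  obtain e where "\<And>u v::'a. dist u v \<le> e" using assms unfolding bounded_two_points by blast
  hence "dist (p x) (q x) \<le> (SUP x. dist (p x) (q x))" for x
    by (intro cSUP_upper bdd_aboveI2) auto
  thus ?thesis using zero_le_dist order_trans by blast
qed

lemma dC0_nonneg:
  assumes "bounded (UNIV :: 'a::metric_space set)"
  shows "0 \<le> dC0 (f :: 'a \<Rightarrow> 'a) g"
  unfolding dC0_def by (intro add_nonneg_nonneg SUP_dist_nonneg assms)

lemma dL_le_dW:
  fixes f g :: "'a::metric_space \<Rightarrow> 'a"
  assumes "bounded (UNIV :: 'a set)" and f: "bilipschitz_with K f" "bilipschitz_with K (inv f)"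
    and "g \<in> biLip" and small: "dW f g \<le> 1 / (2 * K)"
  shows "dL f g \<le> 2 * K * dW f g"
proof -
  obtain Kg where g: "bilipschitz_with Kg g" "bilipschitz_with Kg (inv g)"
    using biLip_bilipschitz_with[OF \<open>g \<in> biLip\<close>] by blast
  have "0 \<le> dC0 f g" "0 \<le> dW' f g" "0 \<le> dW' (inv f) (inv g)"
    using dC0_nonneg[OF assms(1)] dW'_nonneg[OF f(1) g(1)] dW'_nonneg[OF f(2) g(2)] by auto
  hence "dW' f g \<le> 1 / (2 * K)" "dW' (inv f) (inv g) \<le> 1 / (2 * K)"
    using small unfolding dW_def by linarith+
  hence "dL' f g \<le> 2 * K * dW' f g" "dL' (inv f) (inv g) \<le> 2 * K * dW' (inv f) (inv g)"
    using dL'_le_dW'[OF f(1) g(1)] dL'_le_dW'[OF f(2) g(2)] by auto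
  moreover have "dC0 f g \<le> 2 * K * dC0 f g"
    using \<open>0 \<le> dC0 f g\<close> bilipschitz_withD(1)[OF f(1)] by (simp add: mult_le_cancel_right1)
  ultimately show ?thesis unfolding dL_def dW_def by (simp add: algebra_simps)
qed

lemma dW_le_dL:
  fixes f g :: "'a::metric_space \<Rightarrow> 'a"
  assumes "bounded (UNIV :: 'a set)" and f: "bilipschitz_with K f" "bilipschitz_with K (inv f)"
    and "g \<in> biLip" and small: "dL f g \<le> 1 / 2"
  shows "dW f g \<le> 2 * K * dL f g"
proof -
  obtain Kg where g: "bilipschitz_with Kg g" "bilipschitz_with Kg (inv g)"
    using biLip_bilipschitz_with[OF \<open>g \<in> biLip\<close>] by blast
  have "0 \<le> dC0 f g" "0 \<le> dL' f g" "0 \<le> dL' (inv f) (inv g)"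
    using dC0_nonneg[OF assms(1)] dL'_nonneg[OF f(1) g(1)] dL'_nonneg[OF f(2) g(2)] by auto
  hence "dL' f g \<le> 1 / 2" "dL' (inv f) (inv g) \<le> 1 / 2"
    using small unfolding dL_def by linarith+
  hence "dW' f g \<le> 2 * K * dL' f g" "dW' (inv f) (inv g) \<le> 2 * K * dL' (inv f) (inv g)"
    using dW'_le_dL'[OF f(1) g(1)] dW'_le_dL'[OF f(2) g(2)] by auto
  moreover have "dC0 f g \<le> 2 * K * dC0 f g"
    using \<open>0 \<le> dC0 f g\<close> bilipschitz_withD(1)[OF f(1)] by (simp add: mult_le_cancel_right1)
  ultimately show ?thesis unfolding dL_def dW_def by (simp add: algebra_simps)
qed

section \<open>Locally comparable distances induce the same topology\<close>

lemma metric_open_if_locally_dominated: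
  assumes dominated: "\<And>f. f \<in> M \<Longrightarrow> \<exists>r>0. \<exists>C>0. \<forall>g\<in>M. \<sigma> f g < r \<longrightarrow> \<rho> f g \<le> C * \<sigma> f g"
    and "metric_open M \<rho> U"
  shows "metric_open M \<sigma> U"
  unfolding metric_open_def
proof (intro conjI ballI)
  show "U \<subseteq> M" using assms(2) unfolding metric_open_def by blast
  fix f assume "f \<in> U"
  obtain e where "0 < e" and ball_e: "\<forall>g\<in>M. \<rho> f g < e \<longrightarrow> g \<in> U"
    using assms(2) \<open>f \<in> U\<close> unfolding metric_open_def by blast
  obtain r C where "0 < r" "0 < C" and dom: "\<forall>g\<in>M. \<sigma> f g < r \<longrightarrow> \<rho> f g \<le> C * \<sigma> f g"
    using dominated \<open>f \<in> U\<close> \<open>U \<subseteq> M\<close> by blast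
  have "\<forall>g\<in>M. \<sigma> f g < min r (e / C) \<longrightarrow> g \<in> U"
  proof (intro ballI impI)
    fix g assume "g \<in> M" "\<sigma> f g < min r (e / C)"
    hence "\<rho> f g \<le> C * \<sigma> f g" "C * \<sigma> f g < e"
      using dom \<open>0 < C\<close> by (auto simp: pos_less_divide_eq mult.commute)
    thus "g \<in> U" using ball_e \<open>g \<in> M\<close> by simp
  qed
  thus "\<exists>e>0. \<forall>g\<in>M. \<sigma> f g < e \<longrightarrow> g \<in> U"
    using \<open>0 < r\<close> \<open>0 < e\<close> \<open>0 < C\<close> by (intro exI[of _ "min r (e / C)"]) auto
qed

theorem mainTheorem5:
  assumes "compact (UNIV :: 'a::metric_space set)"
  shows "\<forall>U :: ('a \<Rightarrow> 'a) set. metric_open biLip dL U \<longleftrightarrow> metric_open biLip dW U"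
proof -
  have bounded_X: "bounded (UNIV :: 'a set)" using assms by (rule compact_imp_bounded)
  have W_dominates_L: "\<exists>r>0. \<exists>C>0. \<forall>g\<in>biLip. dW f g < r \<longrightarrow> dL f g \<le> C * dW f g"
    and L_dominates_W: "\<exists>r>0. \<exists>C>0. \<forall>g\<in>biLip. dL f g < r \<longrightarrow> dW f g \<le> C * dL f g"
    if "f \<in> biLip" for f :: "'a \<Rightarrow> 'a"
  proof -
    obtain K where K: "bilipschitz_with K f" "bilipschitz_with K (inv f)"
      using biLip_bilipschitz_with[OF \<open>f \<in> biLip\<close>] by blast
    have "0 < K" using bilipschitz_withD(1)[OF K(1)] by simp
    show "\<exists>r>0. \<exists>C>0. \<forall>g\<in>biLip. dW f g < r \<longrightarrow> dL f g \<le> C * dW f g"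
      using dL_le_dW[OF bounded_X K] \<open>0 < K\<close> by (intro exI[of _ "1 / (2 * K)"] conjI exI[of _ "2 * K"]) auto
    show "\<exists>r>0. \<exists>C>0. \<forall>g\<in>biLip. dL f g < r \<longrightarrow> dW f g \<le> C * dL f g"
      using dW_le_dL[OF bounded_X K] \<open>0 < K\<close> by (intro exI[of _ "1 / 2"] conjI exI[of _ "2 * K"]) auto
  qed
  show ?thesis
    using metric_open_if_locally_dominated[where \<rho> = dL and \<sigma> = dW, OF W_dominates_L]
      metric_open_if_locally_dominated[where \<rho> = dW and \<sigma> = dL, OF L_dominates_W] by blast
qed

end
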